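(* Let $n\geq 2$, $\gamma\geq1$, $\alpha\in\mathbb{R}$, $\beta\in\mathbb{R}$. For $p,q,s\geq 1$ define $$\theta_1=\frac{2(p+\gamma-1)}{\gamma+1-\alpha-2\beta},\qquad \theta_2=\frac{2(q-1)(p+\gamma-1)}{p+\gamma-3},$$ and for $i=1,2$ $$\kappa_i(p,q;s)=\frac{\frac{q}{s}-\frac{q}{\theta_i}}{\frac{q}{s}-\left(\frac12-\frac1n\right)},\qquad f_i(p,q;s)=\frac{\theta_i}{q}\kappa_i(p,q;s)=\frac{\frac{\theta_i}{s}-1}{\frac{q}{s}-\left(\frac12-\frac1n\right)}.$$ Then for all sufficiently large $p>1$: (i) if $\alpha+2\beta<\gamma-1+\frac{2}{n}$, one can choose $q>1$ such that $\kappa_i(p,q;\frac{n}{n-1})\in(0,1)$ and $f_i(p,q;\frac{n}{n-1})<2$ for $i=1,2$; (ii) if $\alpha+2\beta<\gamma-1+\frac{4}{n+2}$, there exists $q>1$ such that $\kappa_i(p,q;2)\in(0,1)$ and $f_i(p,q;2)<2$ for $i=1,2$. *)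

theory Defs
  imports Complex_Main
begin

definition theta1 :: "real \<Rightarrow> real \<Rightarrow> real \<Rightarrow> real \<Rightarrow> real" where
  "theta1 \<gamma> \<alpha> \<beta> p = 2 * (p + \<gamma> - 1) / (\<gamma> + 1 - \<alpha> - 2 * \<beta>)"

definition theta2 :: "real \<Rightarrow> real \<Rightarrow> real \<Rightarrow> real" where
  "theta2 \<gamma> p q = 2 * (q - 1) * (p + \<gamma> - 1) / (p + \<gamma> - 3)"

definition theta :: "nat \<Rightarrow> real \<Rightarrow> real \<Rightarrow> real \<Rightarrow> real \<Rightarrow> real \<Rightarrow> real" where
  "theta i \<gamma> \<alpha> \<beta> p q = (if i = 1 then theta1 \<gamma> \<alpha> \<beta> p else theta2 \<gamma> p q)"

definition kappa :: "nat \<Rightarrow> nat \<Rightarrow> real \<Rightarrow> real \<Rightarrow> real \<Rightarrow> real \<Rightarrow> real \<Rightarrow> real \<Rightarrow> real" where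
  "kappa i n \<gamma> \<alpha> \<beta> p q s =
     (q / s - q / theta i \<gamma> \<alpha> \<beta> p q) / (q / s - (1/2 - 1 / real n))"

definition fexp :: "nat \<Rightarrow> nat \<Rightarrow> real \<Rightarrow> real \<Rightarrow> real \<Rightarrow> real \<Rightarrow> real \<Rightarrow> real \<Rightarrow> real" where
  "fexp i n \<gamma> \<alpha> \<beta> p q s = theta i \<gamma> \<alpha> \<beta> p q / q * kappa i n \<gamma> \<alpha> \<beta> p q s"

end

theory Submission
  imports Defs
begin

text \<open>
  Put \<open>P = p + \<gamma> - 1\<close> and \<open>c = \<gamma> + 1 - \<alpha> - 2\<beta>\<close>, so \<open>\<theta>\<^sub>1 = 2P/c\<close> and
  \<open>\<theta>\<^sub>2 = 2(q - 1)P/(P - 2)\<close>. Both requirements on \<open>\<kappa>\<^sub>i, f\<^sub>i\<close> reduce to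
  \<open>s < \<theta>\<^sub>i\<close>, \<open>(1/2 - 1/n)\<theta>\<^sub>i < q\<close> and \<open>\<theta>\<^sub>i < 2q + 2s/n\<close>. Take \<open>q = mP\<close>
  with \<open>1/c < m < (1 + s/n)/2\<close>; such an \<open>m\<close> exists exactly when
  \<open>c > 2n/(n + s)\<close>, which for \<open>s = n/(n-1)\<close> and \<open>s = 2\<close> are the two hypotheses.
  Then \<open>\<theta>\<^sub>1 < 2q\<close>, while \<open>\<theta>\<^sub>2 < 2q + 2s/n\<close> amounts to
  \<open>2mP + 2s/n < (1 + s/n)P\<close>, true for large \<open>P\<close>.
\<close>

definition admissible :: "nat \<Rightarrow> nat \<Rightarrow> real \<Rightarrow> real \<Rightarrow> real \<Rightarrow> real \<Rightarrow> real \<Rightarrow> real \<Rightarrow> bool" where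
  "admissible i n \<gamma> \<alpha> \<beta> p q s \<longleftrightarrow>
     kappa i n \<gamma> \<alpha> \<beta> p q s \<in> {0<..<1} \<and> fexp i n \<gamma> \<alpha> \<beta> p q s < 2"

lemma ratio_bounds:
  fixes s q d \<theta> :: real
  assumes "0 < s" "0 < q" "d * s < q" "s < \<theta>" "d * \<theta> < q" "\<theta> < 2 * q + s * (1 - 2 * d)"
  shows "(q/s - q/\<theta>) / (q/s - d) \<in> {0<..<1}"
    and "\<theta>/q * ((q/s - q/\<theta>) / (q/s - d)) < 2"
proof -
  have "0 < \<theta>" using assms by linarith
  have den: "0 < q/s - d" using assms by (simp add: field_simps)
  have "0 < q/s - q/\<theta>" using assms \<open>0 < \<theta>\<close> by (simp add: frac_less2)
  moreover have "q/s - q/\<theta> < q/s - d" using assms \<open>0 < \<theta>\<close> by (simp add: field_simps)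
  ultimately show "(q/s - q/\<theta>) / (q/s - d) \<in> {0<..<1}" using den by simp
  have "\<theta>/q * (q/s - q/\<theta>) = \<theta>/s - 1" using assms \<open>0 < \<theta>\<close> by (simp add: field_simps)
  also have "\<dots> = (\<theta> - s) / s" using \<open>0 < s\<close> by (simp add: field_simps)
  also have "\<dots> < 2 * (q - d * s) / s"
    using assms by (intro divide_strict_right_mono) (auto simp: algebra_simps)
  also have "\<dots> = 2 * (q/s - d)" using \<open>0 < s\<close> by (simp add: field_simps)
  finally show "\<theta>/q * ((q/s - q/\<theta>) / (q/s - d)) < 2"
    unfolding times_divide_eq_right pos_divide_less_eq[OF den] .
qed

lemma admissibleI:
  fixes i n :: nat and \<gamma> \<alpha> \<beta> p q s :: real
  defines "\<theta> \<equiv> theta i \<gamma> \<alpha> \<beta> p q" and "d \<equiv> 1/2 - 1 / real n"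
  assumes "0 < n" "0 < s" "0 < q" "d * s < q" "s < \<theta>" "d * \<theta> < q" "\<theta> < 2 * q + 2 * s / n"
  shows "admissible i n \<gamma> \<alpha> \<beta> p q s"
proof -
  have "2 * s / n = s * (1 - 2 * d)" using \<open>0 < n\<close> by (simp add: d_def field_simps)
  with assms(9) have "\<theta> < 2 * q + s * (1 - 2 * d)" by simp
  note bounds = ratio_bounds[OF assms(4-8) this]
  show ?thesis
    unfolding admissible_def kappa_def fexp_def \<theta>_def[symmetric] d_def[symmetric]
    using bounds by simp
qed

lemma admissible_1:
  fixes n :: nat and \<gamma> \<alpha> \<beta> p q s :: real
  assumes "0 < n" "0 < s" "s < theta1 \<gamma> \<alpha> \<beta> p" "theta1 \<gamma> \<alpha> \<beta> p < 2 * q"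
  shows "admissible 1 n \<gamma> \<alpha> \<beta> p q s"
proof -
  define d where "d = 1/2 - 1 / real n"
  have "d < 1/2" using \<open>0 < n\<close> by (simp add: d_def)
  have below_half: "d * x < x / 2" if "0 < x" for x
    using mult_strict_right_mono[OF \<open>d < 1/2\<close> that] by simp
  have "0 < theta1 \<gamma> \<alpha> \<beta> p" using assms by linarith
  have "d * s < q" using below_half[OF \<open>0 < s\<close>] assms by linarith
  moreover have "d * theta1 \<gamma> \<alpha> \<beta> p < q"
    using below_half[OF \<open>0 < theta1 \<gamma> \<alpha> \<beta> p\<close>] assms by linarith
  moreover have "theta1 \<gamma> \<alpha> \<beta> p < 2 * q + 2 * s / n"
    using assms divide_nonneg_nonneg[of "2 * s" "real n"] by linarith
  ultimately show ?thesis
    using admissibleI[of n s q 1 \<gamma> \<alpha> \<beta> p] assms by (simp add: theta_def d_def)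
qed

lemma admissible_2:
  fixes n :: nat and \<gamma> \<alpha> \<beta> p q s :: real
  defines "P \<equiv> p + \<gamma> - 1"
  assumes "0 < n" "0 < s" "2 < P" "real n \<le> P" "1 + s/2 < q" "2 * q + 2 * s / n < (1 + s/n) * P"
  shows "admissible 2 n \<gamma> \<alpha> \<beta> p q s"
proof -
  define \<theta> where "\<theta> = 2 * (q - 1) * P / (P - 2)"
  define d where "d = 1/2 - 1 / real n"
  have \<theta>: "theta2 \<gamma> p q = \<theta>" by (simp add: theta2_def \<theta>_def P_def algebra_simps)
  have "d * s < s / 2" using \<open>0 < n\<close> \<open>0 < s\<close> by (simp add: d_def)
  then have "d * s < q" using assms by linarith
  moreover have "s < \<theta>"
  proof -
    have "s < 2 * (q - 1)" using assms by simp
    also have "\<dots> < 2 * (q - 1) * (P / (P - 2))"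
      using mult_strict_left_mono[of 1 "P / (P - 2)" "2 * (q - 1)"] assms by simp
    finally show ?thesis by (simp add: \<theta>_def)
  qed
  moreover have "d * \<theta> < q"
  proof -
    have "2 * d * P \<le> P - 2" using assms by (simp add: d_def field_simps)
    then have "(q - 1) * (2 * d * P) \<le> (q - 1) * (P - 2)"
      using assms by (intro mult_left_mono) auto
    also have "\<dots> < q * (P - 2)" using assms by simp
    finally show ?thesis using assms by (simp add: \<theta>_def field_simps)
  qed
  moreover have "\<theta> < 2 * q + 2 * s / n"
  proof -
    have "(2 * q + 2 * s / n) * (P - 2) - 2 * (q - 1) * P = 2 * ((1 + s/n) * P - 2 * q - 2 * s / n)"
      by (simp add: algebra_simps add_divide_distrib diff_divide_distrib)
    also have "\<dots> > 0" using assms by simp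
    finally show ?thesis using assms by (simp add: \<theta>_def divide_less_eq)
  qed
  ultimately show ?thesis
    using admissibleI[of n s q 2 \<gamma> \<alpha> \<beta> p] assms by (simp add: theta_def \<theta> d_def)
qed

lemma eventually_less_mult_at_top:
  fixes k K g :: real
  assumes "0 < k"
  shows "\<forall>\<^sub>F p in at_top. K < k * (p + g)"
  using eventually_gt_at_top[of "K / k - g"]
proof (rule eventually_mono)
  fix p assume "K / k - g < p"
  then show "K < k * (p + g)" using assms by (simp add: field_simps)
qed

lemma eventually_admissible:
  fixes n :: nat and \<gamma> \<alpha> \<beta> s :: real
  assumes "0 < n" "0 < s" "2 * real n / (real n + s) < \<gamma> + 1 - \<alpha> - 2 * \<beta>"
  shows "\<forall>\<^sub>F p in at_top. \<exists>q > 1. admissible 1 n \<gamma> \<alpha> \<beta> p q s \<and> admissible 2 n \<gamma> \<alpha> \<beta> p q s"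
proof -
  define c where "c = \<gamma> + 1 - \<alpha> - 2 * \<beta>"
  have "0 < 2 * real n / (real n + s)" using assms by simp
  then have "0 < c" using assms(3) by (simp add: c_def)
  have "2 * real n < c * (real n + s)" using assms \<open>0 < c\<close> by (simp add: c_def divide_less_eq)
  then have "1 / c < (1 + s / n) / 2" using assms \<open>0 < c\<close> by (simp add: field_simps)
  then obtain m where m: "1 / c < m" "m < (1 + s / n) / 2" using dense by blast
  then have "0 < m" using \<open>0 < c\<close> by (metis divide_pos_pos less_trans zero_less_one)
  have "\<forall>\<^sub>F p in at_top. s < (2 / c) * (p + (\<gamma> - 1)) \<and> max 2 n < 1 * (p + (\<gamma> - 1)) \<and>
      1 + s / 2 < m * (p + (\<gamma> - 1)) \<and> 2 * s / n < (1 + s / n - 2 * m) * (p + (\<gamma> - 1))"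
    using \<open>0 < c\<close> \<open>0 < m\<close> m(2)
    by (intro eventually_conj eventually_less_mult_at_top) auto
  then show ?thesis
  proof (rule eventually_mono)
    fix p
    define P where "P = p + \<gamma> - 1"
    assume "s < (2 / c) * (p + (\<gamma> - 1)) \<and> max 2 n < 1 * (p + (\<gamma> - 1)) \<and>
      1 + s / 2 < m * (p + (\<gamma> - 1)) \<and> 2 * s / n < (1 + s / n - 2 * m) * (p + (\<gamma> - 1))"
    then have large: "s < 2 / c * P" "2 < P" "real n < P" "1 + s / 2 < m * P"
        "2 * (m * P) + 2 * s / n < (1 + s / n) * P"
      by (auto simp: P_def algebra_simps)
    have theta1: "theta1 \<gamma> \<alpha> \<beta> p = 2 / c * P" by (simp add: theta1_def c_def P_def)
    have "2 / c * P < 2 * (m * P)" using mult_strict_right_mono[OF m(1), of P] large(2) by simp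
    then have "admissible 1 n \<gamma> \<alpha> \<beta> p (m * P) s"
      using assms large by (intro admissible_1) (simp_all add: theta1)
    moreover have "admissible 2 n \<gamma> \<alpha> \<beta> p (m * P) s"
      using assms large by (intro admissible_2) (simp_all add: P_def)
    moreover have "1 < m * P" using large \<open>0 < s\<close> by linarith
    ultimately show "\<exists>q > 1. admissible 1 n \<gamma> \<alpha> \<beta> p q s \<and> admissible 2 n \<gamma> \<alpha> \<beta> p q s"
      by blast
  qed
qed

theorem lemma2p3:
  fixes n :: nat and \<gamma> \<alpha> \<beta> :: real
  assumes "n \<ge> 2" and "\<gamma> \<ge> 1"
  shows "\<forall>\<^sub>F p in at_top. p > 1 \<and>
    (\<alpha> + 2 * \<beta> < \<gamma> - 1 + 2 / real n \<longrightarrow>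
       (\<exists>q::real. q > 1 \<and> (\<forall>i\<in>{1::nat, 2}.
          kappa i n \<gamma> \<alpha> \<beta> p q (real n / (real n - 1)) \<in> {0<..<1} \<and>
          fexp i n \<gamma> \<alpha> \<beta> p q (real n / (real n - 1)) < 2))) \<and>
    (\<alpha> + 2 * \<beta> < \<gamma> - 1 + 4 / (real n + 2) \<longrightarrow>
       (\<exists>q::real. q > 1 \<and> (\<forall>i\<in>{1::nat, 2}.
          kappa i n \<gamma> \<alpha> \<beta> p q 2 \<in> {0<..<1} \<and>
          fexp i n \<gamma> \<alpha> \<beta> p q 2 < 2)))"
proof -
  define good where "good s p \<longleftrightarrow> (\<exists>q::real. q > 1 \<and> (\<forall>i\<in>{1::nat, 2}.
      kappa i n \<gamma> \<alpha> \<beta> p q s \<in> {0<..<1} \<and> fexp i n \<gamma> \<alpha> \<beta> p q s < 2))" for s p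
  have good: "\<forall>\<^sub>F p in at_top. good s p"
    if "0 < s" "2 * real n / (real n + s) < \<gamma> + 1 - \<alpha> - 2 * \<beta>" for s
    using eventually_admissible[OF _ that] assms(1)
    by (auto elim!: eventually_mono simp: good_def admissible_def)
  have "1 < real n" using assms(1) by simp
  then have "2 * real n / (real n + real n / (real n - 1)) = 2 - 2 / real n" "0 < real n / (real n - 1)"
    by (simp_all add: field_simps)
  then have case_i: "\<forall>\<^sub>F p in at_top.
      \<alpha> + 2 * \<beta> < \<gamma> - 1 + 2 / real n \<longrightarrow> good (real n / (real n - 1)) p"
    using good[of "real n / (real n - 1)"] by (cases "\<alpha> + 2 * \<beta> < \<gamma> - 1 + 2 / real n") auto
  have "2 * real n / (real n + 2) = 2 - 4 / (real n + 2)" by (simp add: field_simps)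
  then have case_ii: "\<forall>\<^sub>F p in at_top. \<alpha> + 2 * \<beta> < \<gamma> - 1 + 4 / (real n + 2) \<longrightarrow> good 2 p"
    using good[of 2] by (cases "\<alpha> + 2 * \<beta> < \<gamma> - 1 + 4 / (real n + 2)") auto
  show ?thesis
    using eventually_gt_at_top[of 1] case_i case_ii unfolding good_def by eventually_elim blast
qed

end
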